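(* Let $k\ge1$, let $K=\Delta_n^{(k)}$ be the $k$-skeleton of the $n$-simplex, let $M$ be a closed PL $2k$-manifold, and let $\psi\colon C_k(K;\mathbb{Z}_2)\to H_k(M;\mathbb{Z}_2)$ be a homomorphism. Let $J$ be an induced subcomplex of $K$ on $2k+3$ vertices. Then for every vertex $v$ of $J$, $$\sum_{\{\sigma',\tau'\}\in P_J}\Omega(\psi(\sigma'),\psi(\tau'))=\sum_{\{\sigma,\tau\}\in P_{J,v}}\Omega\big(\psi(\partial(\sigma*\{v\})),\psi(\partial(\tau*\{v\}))\big),$$ where $P_J$ is the set of unordered pairs $\{\sigma',\tau'\}$ of disjoint $k$-simplices of $J$, $P_{J,v}$ is the set of unordered pairs $\{\sigma,\tau\}$ of disjoint $k$-simplices of $J$ not containing $v$, and $\sigma*\{v\}$ is the $(k+1)$-simplex spanned by the vertices of $\sigma$ and $v$.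
   Context: All coefficients are $\mathbb{Z}_2$. $\Omega$ is the mod-2 intersection form of $M$ on $H_k(M;\mathbb{Z}_2)$, a symmetric bilinear form. For a $(k+1)$-simplex $\kappa$, $\partial\kappa\in C_k(K;\mathbb{Z}_2)$ is the sum of its $k$-faces. *)

theory Defs
  imports Main "HOL-Library.Z2"
begin

(* Vertex set of the n-simplex: {0..n}.  k-simplices of K = Delta_n^(k): (k+1)-subsets. *)
definition ksimplices :: "nat \<Rightarrow> nat \<Rightarrow> nat set set" where
  "ksimplices n k = {s. s \<subseteq> {0..n} \<and> card s = k + 1}"

definition chains :: "nat \<Rightarrow> nat \<Rightarrow> (nat set \<Rightarrow> bit) set" where
  "chains n k = {c. \<forall>s. c s \<noteq> 0 \<longrightarrow> s \<in> ksimplices n k}"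

definition elem :: "nat set \<Rightarrow> (nat set \<Rightarrow> bit)" where
  "elem \<sigma> = (\<lambda>s. if s = \<sigma> then 1 else 0)"

definition bd :: "nat set \<Rightarrow> (nat set \<Rightarrow> bit)" where
  "bd \<kappa> = (\<lambda>s. if s \<subseteq> \<kappa> \<and> card s + 1 = card \<kappa> then 1 else 0)"

(* sum of a (symmetric) function over a set of unordered pairs {x,y}, x \<noteq> y *)
definition upair_sum :: "('s \<Rightarrow> 's \<Rightarrow> 'b::comm_monoid_add) \<Rightarrow> 's set set \<Rightarrow> 'b" where
  "upair_sum g P = (\<Sum>p\<in>P. g (SOME x. x \<in> p) (SOME y. y \<in> p \<and> y \<noteq> (SOME x. x \<in> p)))"

(* P_J for the induced subcomplex on vertex set W *)
definition PJ :: "nat \<Rightarrow> nat \<Rightarrow> nat set \<Rightarrow> nat set set set" where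
  "PJ n k W = {{\<sigma>, \<tau>} | \<sigma> \<tau>. \<sigma> \<in> ksimplices n k \<and> \<tau> \<in> ksimplices n k \<and>
                 \<sigma> \<subseteq> W \<and> \<tau> \<subseteq> W \<and> \<sigma> \<inter> \<tau> = {}}"

definition PJv :: "nat \<Rightarrow> nat \<Rightarrow> nat set \<Rightarrow> nat \<Rightarrow> nat set set set" where
  "PJv n k W v = {{\<sigma>, \<tau>} | \<sigma> \<tau>. \<sigma> \<in> ksimplices n k \<and> \<tau> \<in> ksimplices n k \<and>
                 \<sigma> \<subseteq> W \<and> \<tau> \<subseteq> W \<and> \<sigma> \<inter> \<tau> = {} \<and> v \<notin> \<sigma> \<and> v \<notin> \<tau>}"

end

theory Submission
  imports Defs "HOL-Library.Disjoint_Sets"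
begin

(* Two disjoint k-simplices of J cover 2k+2 of its 2k+3 vertices, so a pair in P_J either misses v
   (these pairs form P_{J,v}) or has v in one of its simplices.  On the right-hand side,
   the boundary of the cone over sigma is sigma plus the faces (sigma - x) * v, and bilinearity
   expands each summand into Omega(sigma, tau) plus cross terms.  The first terms give the
   P_{J,v} part of the left-hand side.  The cross terms Omega(sigma, (tau - y) * v) correspond
   bijectively, via the pair {sigma, J - sigma - y}, to the pairs of P_J containing v.  The
   terms Omega((sigma - x) * v, (tau - y) * v) cancel in pairs: replacing sigma by (tau - y) + x
   just swaps the two faces. *)

lemma upair_sum_singleton:
  assumes "card p = 2"
  obtains x y where "p = {x, y}" "x \<noteq> y" "\<And>G. upair_sum G {p} = G x y"
proof -
  obtain a b where p: "p = {a, b}" "a \<noteq> b"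
    using assms by (meson card_2_iff)
  define x where "x = (SOME x. x \<in> p)"
  have x: "x \<in> p"
    unfolding x_def p by (rule someI[of _ a]) simp
  define y where "y = (SOME y. y \<in> p \<and> y \<noteq> x)"
  have "\<exists>y. y \<in> p \<and> y \<noteq> x"
    using x p by blast
  then have y: "y \<in> p \<and> y \<noteq> x"
    unfolding y_def by (rule someI_ex)
  have "p = {x, y}"
    using x y p by blast
  moreover have "upair_sum G {p} = G x y" for G
    unfolding upair_sum_def x_def y_def by simp
  ultimately show thesis
    using y that by blast
qed

lemma upair_sum_cong:
  fixes G H :: "'s \<Rightarrow> 's \<Rightarrow> 'b::comm_monoid_add"
  assumes "\<And>p. p \<in> P \<Longrightarrow> card p = 2"
    and "\<And>a b. {a, b} \<in> P \<Longrightarrow> a \<noteq> b \<Longrightarrow> G a b = H a b"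
  shows "upair_sum G P = upair_sum H P"
proof -
  have "upair_sum G {p} = upair_sum H {p}" if p: "p \<in> P" for p
  proof -
    obtain x y where "p = {x, y}" "x \<noteq> y" "\<And>F :: 's \<Rightarrow> 's \<Rightarrow> 'b. upair_sum F {p} = F x y"
      using upair_sum_singleton[OF assms(1)[OF p]] by blast
    then show ?thesis
      using assms(2) p by simp
  qed
  then show ?thesis
    unfolding upair_sum_def by (intro sum.cong) simp_all
qed

lemma upair_sum_doubleton:
  fixes G :: "'s \<Rightarrow> 's \<Rightarrow> 'b::comm_monoid_add"
  assumes "a \<noteq> b" "G b a = G a b"
  shows "upair_sum G {{a, b}} = G a b"
proof -
  have "card {a, b} = 2"
    using assms(1) by simp
  then obtain x y where xy: "{a, b} = {x, y}" "x \<noteq> y"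
    and G: "\<And>F :: 's \<Rightarrow> 's \<Rightarrow> 'b. upair_sum F {{a, b}} = F x y"
    using upair_sum_singleton by blast
  from xy have "x = a \<and> y = b \<or> x = b \<and> y = a"
    by (auto simp: doubleton_eq_iff)
  then show ?thesis
    using G assms(2) by auto
qed

lemma upair_sum_add:
  "upair_sum (\<lambda>a b. G a b + H a b) P = upair_sum G P + upair_sum H P"
  by (simp add: upair_sum_def sum.distrib)

lemma upair_sum_reindex:
  assumes "bij_betw (\<lambda>x. {f x, f' x}) X P" "\<And>x. x \<in> X \<Longrightarrow> f x \<noteq> f' x"
    and "\<And>a b. G b a = G a b"
  shows "upair_sum G P = (\<Sum>x\<in>X. G (f x) (f' x))"
proof -
  have "upair_sum G P = (\<Sum>x\<in>X. upair_sum G {{f x, f' x}})"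
    unfolding upair_sum_def sum.reindex_bij_betw[OF assms(1), symmetric] by simp
  also have "\<dots> = (\<Sum>x\<in>X. G (f x) (f' x))"
    using assms(2,3) by (simp add: upair_sum_doubleton)
  finally show ?thesis .
qed

lemma upair_sum_symmetrize_orbits:
  assumes "finite K" and c: "\<And>\<sigma>. \<sigma> \<in> K \<Longrightarrow> c \<sigma> \<in> K" "\<And>\<sigma>. \<sigma> \<in> K \<Longrightarrow> c (c \<sigma>) = \<sigma>"
    "\<And>\<sigma>. \<sigma> \<in> K \<Longrightarrow> c \<sigma> \<noteq> \<sigma>"
  shows "upair_sum (\<lambda>a b. G a b + G b a) ((\<lambda>\<sigma>. {\<sigma>, c \<sigma>}) ` K) = (\<Sum>\<sigma>\<in>K. G \<sigma> (c \<sigma>))"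
proof -
  have orbit: "{\<tau> \<in> K. {\<tau>, c \<tau>} = {\<sigma>, c \<sigma>}} = {\<sigma>, c \<sigma>}" if "\<sigma> \<in> K" for \<sigma>
    using that c by (auto simp: doubleton_eq_iff)
  have "(\<Sum>\<sigma>\<in>K. G \<sigma> (c \<sigma>))
      = (\<Sum>p\<in>(\<lambda>\<sigma>. {\<sigma>, c \<sigma>}) ` K. \<Sum>\<tau>\<in>{\<tau> \<in> K. {\<tau>, c \<tau>} = p}. G \<tau> (c \<tau>))"
    by (rule sum.image_gen[OF assms(1)])
  also have "\<dots> = (\<Sum>p\<in>(\<lambda>\<sigma>. {\<sigma>, c \<sigma>}) ` K. upair_sum (\<lambda>a b. G a b + G b a) {p})"
  proof (rule sum.cong[OF refl])
    fix p assume "p \<in> (\<lambda>\<sigma>. {\<sigma>, c \<sigma>}) ` K"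
    then obtain \<sigma> where \<sigma>: "\<sigma> \<in> K" "p = {\<sigma>, c \<sigma>}" by blast
    have "upair_sum (\<lambda>a b. G a b + G b a) {{\<sigma>, c \<sigma>}} = G \<sigma> (c \<sigma>) + G (c \<sigma>) \<sigma>"
      by (rule upair_sum_doubleton) (use c(3)[OF \<sigma>(1)] in \<open>simp_all add: add.commute\<close>)
    then show "(\<Sum>\<tau>\<in>{\<tau> \<in> K. {\<tau>, c \<tau>} = p}. G \<tau> (c \<tau>)) = upair_sum (\<lambda>a b. G a b + G b a) {p}"
      using c(2)[OF \<sigma>(1)] not_sym[OF c(3)[OF \<sigma>(1)]] orbit[OF \<sigma>(1)] \<sigma>(2) by simp
  qed
  finally show ?thesis
    by (simp add: upair_sum_def)
qed

lemma elem_in_chains: "\<sigma> \<in> ksimplices n k \<Longrightarrow> elem \<sigma> \<in> chains n k"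
  by (simp add: chains_def elem_def)

lemma additive_on_chains_sum:
  fixes \<psi> :: "(nat set \<Rightarrow> bit) \<Rightarrow> 'v::cancel_comm_monoid_add"
  assumes hom: "\<And>c d. c \<in> chains n k \<Longrightarrow> d \<in> chains n k \<Longrightarrow> \<psi> (\<lambda>s. c s + d s) = \<psi> c + \<psi> d"
    and "finite F" "\<And>x. x \<in> F \<Longrightarrow> c x \<in> chains n k"
  shows "\<psi> (\<lambda>s. \<Sum>x\<in>F. c x s) = (\<Sum>x\<in>F. \<psi> (c x))"
  using assms(2,3)
proof (induction F rule: finite_induct)
  case empty
  have "(\<lambda>s. 0) \<in> chains n k"
    by (simp add: chains_def)
  then have "\<psi> (\<lambda>s. 0) + \<psi> (\<lambda>s. 0) = \<psi> (\<lambda>s. 0) + 0"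
    using hom by fastforce
  then show ?case
    by simp
next
  case (insert x F)
  have "s \<in> ksimplices n k" if nz: "(\<Sum>y\<in>F. c y s) \<noteq> 0" for s
  proof -
    obtain y where "y \<in> F" "c y s \<noteq> 0"
      using nz by (rule sum.not_neutral_contains_not_neutral)
    then show ?thesis
      using insert.prems by (auto simp: chains_def)
  qed
  then have "(\<lambda>s. \<Sum>y\<in>F. c y s) \<in> chains n k"
    by (simp add: chains_def)
  then show ?case
    using insert hom[of "c x" "\<lambda>s. \<Sum>y\<in>F. c y s"] by simp
qed

lemma subset_card_Suc_iff_Diff_singleton:
  assumes "finite \<kappa>"
  shows "s \<subseteq> \<kappa> \<and> card s + 1 = card \<kappa> \<longleftrightarrow> (\<exists>x\<in>\<kappa>. s = \<kappa> - {x})"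
proof
  assume s: "s \<subseteq> \<kappa> \<and> card s + 1 = card \<kappa>"
  moreover have "finite s"
    using s assms finite_subset by blast
  ultimately have "card (\<kappa> - s) = 1"
    by (auto simp: card_Diff_subset)
  then obtain x where "\<kappa> - s = {x}"
    by (rule card_1_singletonE)
  then show "\<exists>x\<in>\<kappa>. s = \<kappa> - {x}"
    using s by blast
next
  assume "\<exists>x\<in>\<kappa>. s = \<kappa> - {x}"
  then show "s \<subseteq> \<kappa> \<and> card s + 1 = card \<kappa>"
    using assms by (metis Diff_subset card_Suc_Diff1 Suc_eq_plus1)
qed

lemma bd_eq_sum_faces:
  assumes "finite \<kappa>"
  shows "bd \<kappa> = (\<lambda>s. \<Sum>x\<in>\<kappa>. elem (\<kappa> - {x}) s)"
proof
  fix s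
  show "bd \<kappa> s = (\<Sum>x\<in>\<kappa>. elem (\<kappa> - {x}) s)"
  proof (cases "\<exists>x\<in>\<kappa>. s = \<kappa> - {x}")
    case True
    then obtain x0 where x0: "x0 \<in> \<kappa>" "s = \<kappa> - {x0}"
      by blast
    have "elem (\<kappa> - {x}) s = (if x = x0 then 1 else 0)" if "x \<in> \<kappa>" for x
      using that x0 by (auto simp: elem_def)
    then show ?thesis
      unfolding bd_def subset_card_Suc_iff_Diff_singleton[OF assms] using True x0 assms by simp
  next
    case False
    then show ?thesis
      unfolding bd_def subset_card_Suc_iff_Diff_singleton[OF assms] by (auto simp: elem_def)
  qed
qed

lemma additive_bd_eq_sum_faces:
  fixes \<psi> :: "(nat set \<Rightarrow> bit) \<Rightarrow> 'v::cancel_comm_monoid_add"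
  assumes hom: "\<And>c d. c \<in> chains n k \<Longrightarrow> d \<in> chains n k \<Longrightarrow> \<psi> (\<lambda>s. c s + d s) = \<psi> c + \<psi> d"
    and \<kappa>: "\<kappa> \<in> ksimplices n (Suc k)"
  shows "\<psi> (bd \<kappa>) = (\<Sum>x\<in>\<kappa>. \<psi> (elem (\<kappa> - {x})))"
proof -
  have fin: "finite \<kappa>"
    using \<kappa> by (auto simp: ksimplices_def intro: finite_subset)
  have "\<kappa> - {x} \<in> ksimplices n k" if "x \<in> \<kappa>" for x
    using \<kappa> that fin by (auto simp: ksimplices_def)
  then show ?thesis
    unfolding bd_eq_sum_faces[OF fin]
    by (intro additive_on_chains_sum[OF hom fin] elem_in_chains)
qed

lemma additive_bd_cone:
  fixes \<psi> :: "(nat set \<Rightarrow> bit) \<Rightarrow> 'v::cancel_comm_monoid_add"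
  assumes hom: "\<And>c d. c \<in> chains n k \<Longrightarrow> d \<in> chains n k \<Longrightarrow> \<psi> (\<lambda>s. c s + d s) = \<psi> c + \<psi> d"
    and \<sigma>: "\<sigma> \<in> ksimplices n k" and v: "v \<le> n" "v \<notin> \<sigma>"
  shows "\<psi> (bd (\<sigma> \<union> {v})) = \<psi> (elem \<sigma>) + (\<Sum>x\<in>\<sigma>. \<psi> (elem (insert v (\<sigma> - {x}))))"
proof -
  have fin: "finite \<sigma>"
    using \<sigma> by (auto simp: ksimplices_def intro: finite_subset)
  have "insert v \<sigma> \<in> ksimplices n (Suc k)"
    using \<sigma> v fin by (auto simp: ksimplices_def)
  with hom have "\<psi> (bd (insert v \<sigma>)) = (\<Sum>x\<in>insert v \<sigma>. \<psi> (elem (insert v \<sigma> - {x})))"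
    by (rule additive_bd_eq_sum_faces)
  also have "\<dots> = \<psi> (elem \<sigma>) + (\<Sum>x\<in>\<sigma>. \<psi> (elem (insert v (\<sigma> - {x}))))"
    using fin v by (auto intro!: sum.cong simp: insert_Diff_if)
  finally show ?thesis
    by simp
qed

lemma additive_sum:
  fixes h :: "'a::comm_monoid_add \<Rightarrow> 'b::cancel_comm_monoid_add"
  assumes "\<And>x y. h (x + y) = h x + h y"
  shows "h (\<Sum>x\<in>A. f x) = (\<Sum>x\<in>A. h (f x))"
proof -
  have "h 0 + h 0 = h 0 + 0"
    using assms[of 0 0] by simp
  then have "h 0 = 0"
    by simp
  then show ?thesis
    using sum_comp_morphism[of h f A] assms by (simp add: comp_def)
qed

(* The term Omega(sum_x (sigma - x) * v, sum_y (tau - y) * v) is symmetric in sigma and tau but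
   cannot be halved over Z_2; it is shared between the ordered pairs (sigma, tau) and
   (tau, sigma) according to which of the two removed vertices is smaller. *)
definition cone_cross_terms ::
  "(nat set \<Rightarrow> nat set \<Rightarrow> 'b::comm_monoid_add) \<Rightarrow> nat \<Rightarrow> nat set \<Rightarrow> nat set \<Rightarrow> 'b" where
  "cone_cross_terms g v \<sigma> \<tau> =
     (\<Sum>y\<in>\<tau>. g \<sigma> (insert v (\<tau> - {y}))) +
     (\<Sum>x\<in>\<sigma>. \<Sum>y\<in>{y \<in> \<tau>. x < y}. g (insert v (\<sigma> - {x})) (insert v (\<tau> - {y})))"

lemma Omega_bd_cone_expansion:
  fixes \<psi> :: "(nat set \<Rightarrow> bit) \<Rightarrow> 'v::ab_group_add" and \<Omega> :: "'v \<Rightarrow> 'v \<Rightarrow> bit"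
  defines "g \<equiv> \<lambda>A B. \<Omega> (\<psi> (elem A)) (\<psi> (elem B))"
  assumes hom: "\<And>c d. c \<in> chains n k \<Longrightarrow> d \<in> chains n k \<Longrightarrow> \<psi> (\<lambda>s. c s + d s) = \<psi> c + \<psi> d"
    and lin: "\<And>x y z. \<Omega> (x + y) z = \<Omega> x z + \<Omega> y z"
    and sym: "\<And>x y. \<Omega> x y = \<Omega> y x"
    and \<sigma>\<tau>: "\<sigma> \<in> ksimplices n k" "\<tau> \<in> ksimplices n k" "\<sigma> \<inter> \<tau> = {}"
    and v: "v \<le> n" "v \<notin> \<sigma>" "v \<notin> \<tau>"
  shows "\<Omega> (\<psi> (bd (\<sigma> \<union> {v}))) (\<psi> (bd (\<tau> \<union> {v})))
    = g \<sigma> \<tau> + (cone_cross_terms g v \<sigma> \<tau> + cone_cross_terms g v \<tau> \<sigma>)"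
proof -
  have fin: "finite \<sigma>" "finite \<tau>"
    using \<sigma>\<tau> by (auto simp: ksimplices_def intro: finite_subset)
  define F where "F \<rho> x = \<psi> (elem (insert v (\<rho> - {x})))" for \<rho> x
  have cone: "\<psi> (bd (\<rho> \<union> {v})) = \<psi> (elem \<rho>) + (\<Sum>x\<in>\<rho>. F \<rho> x)"
    if "\<rho> \<in> ksimplices n k" "v \<notin> \<rho>" for \<rho>
    unfolding F_def using hom that(1) v(1) that(2) by (rule additive_bd_cone)
  have lin_right: "\<Omega> z (x + y) = \<Omega> z x + \<Omega> z y" for x y z
    using lin sym by metis
  have sum_left: "\<Omega> (\<Sum>x\<in>A. f x) z = (\<Sum>x\<in>A. \<Omega> (f x) z)" for A f z
    by (rule additive_sum[where h = "\<lambda>x. \<Omega> x z"]) (rule lin)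
  have sum_right: "\<Omega> z (\<Sum>x\<in>A. f x) = (\<Sum>x\<in>A. \<Omega> z (f x))" for A f z
    by (rule additive_sum[where h = "\<lambda>x. \<Omega> z x"]) (rule lin_right)
  have split: "(\<Sum>y\<in>\<tau>. h y) = (\<Sum>y\<in>{y \<in> \<tau>. x < y}. h y) + (\<Sum>y\<in>{y \<in> \<tau>. y < x}. h y)"
    if "x \<in> \<sigma>" for x and h :: "nat \<Rightarrow> bit"
  proof -
    have "\<tau> = {y \<in> \<tau>. x < y} \<union> {y \<in> \<tau>. y < x}"
      using that \<sigma>\<tau>(3) by auto
    then show ?thesis
      using fin(2) by (metis (no_types, lifting) sum.union_disjoint finite_Un disjoint_iff
          mem_Collect_eq not_less_iff_gr_or_eq)
  qed
  have cross: "\<Omega> (\<Sum>x\<in>\<sigma>. F \<sigma> x) (\<Sum>y\<in>\<tau>. F \<tau> y)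
      = (\<Sum>x\<in>\<sigma>. \<Sum>y\<in>{y \<in> \<tau>. x < y}. g (insert v (\<sigma> - {x})) (insert v (\<tau> - {y})))
      + (\<Sum>y\<in>\<tau>. \<Sum>x\<in>{x \<in> \<sigma>. y < x}. g (insert v (\<tau> - {y})) (insert v (\<sigma> - {x})))"
  proof -
    have "\<Omega> (\<Sum>x\<in>\<sigma>. F \<sigma> x) (\<Sum>y\<in>\<tau>. F \<tau> y) = (\<Sum>x\<in>\<sigma>. \<Sum>y\<in>\<tau>. \<Omega> (F \<sigma> x) (F \<tau> y))"
      unfolding sum_left by (simp add: sum_right)
    also have "\<dots> = (\<Sum>x\<in>\<sigma>. \<Sum>y\<in>{y \<in> \<tau>. x < y}. \<Omega> (F \<sigma> x) (F \<tau> y))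
        + (\<Sum>x\<in>\<sigma>. \<Sum>y\<in>{y \<in> \<tau>. y < x}. \<Omega> (F \<sigma> x) (F \<tau> y))"
      unfolding sum.distrib[symmetric] by (intro sum.cong refl split)
    also have "(\<Sum>x\<in>\<sigma>. \<Sum>y\<in>{y \<in> \<tau>. y < x}. \<Omega> (F \<sigma> x) (F \<tau> y))
        = (\<Sum>y\<in>\<tau>. \<Sum>x\<in>{x \<in> \<sigma>. y < x}. \<Omega> (F \<tau> y) (F \<sigma> x))"
      using sum.swap_restrict[OF fin] sym by simp
    finally show ?thesis
      by (simp add: F_def g_def)
  qed
  have "\<Omega> (\<psi> (bd (\<sigma> \<union> {v}))) (\<psi> (bd (\<tau> \<union> {v})))
      = \<Omega> (\<psi> (elem \<sigma>) + (\<Sum>x\<in>\<sigma>. F \<sigma> x)) (\<psi> (elem \<tau>) + (\<Sum>y\<in>\<tau>. F \<tau> y))"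
    using cone \<sigma>\<tau> v by simp
  also have "\<dots> = g \<sigma> \<tau> + \<Omega> (\<psi> (elem \<sigma>)) (\<Sum>y\<in>\<tau>. F \<tau> y) + \<Omega> (\<psi> (elem \<tau>)) (\<Sum>x\<in>\<sigma>. F \<sigma> x)
      + \<Omega> (\<Sum>x\<in>\<sigma>. F \<sigma> x) (\<Sum>y\<in>\<tau>. F \<tau> y)"
    by (simp add: g_def lin lin_right sym[of "sum _ _" "\<psi> (elem \<tau>)"] ac_simps del: add_bit_eq_xor)
  also have "\<dots> = g \<sigma> \<tau> + (cone_cross_terms g v \<sigma> \<tau> + cone_cross_terms g v \<tau> \<sigma>)"
    unfolding cross cone_cross_terms_def sum_right[of "\<psi> (elem _)"]
    by (simp add: F_def g_def ac_simps del: add_bit_eq_xor)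
  finally show ?thesis .
qed

lemma PJv_eq_complement_pairs:
  assumes W: "W \<subseteq> {0..n}" "card W = 2 * k + 3" and v: "v \<in> W"
  shows "PJv n k W v = (\<lambda>\<sigma>. {\<sigma>, W - {v} - \<sigma>}) ` {\<sigma>. \<sigma> \<subseteq> W - {v} \<and> card \<sigma> = k + 1}"
proof -
  have fin: "finite W"
    using W(1) finite_subset by blast
  have cardV: "card (W - {v}) = 2 * k + 2"
    using W(2) v fin by simp
  show ?thesis
  proof (intro equalityI subsetI)
    fix p assume "p \<in> PJv n k W v"
    then obtain \<sigma> \<tau> where p: "p = {\<sigma>, \<tau>}" "\<sigma> \<in> ksimplices n k" "\<tau> \<in> ksimplices n k"
      "\<sigma> \<subseteq> W" "\<tau> \<subseteq> W" "\<sigma> \<inter> \<tau> = {}" "v \<notin> \<sigma>" "v \<notin> \<tau>"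
      unfolding PJv_def by blast
    have sub: "\<sigma> \<union> \<tau> \<subseteq> W - {v}"
      using p by blast
    have "card (\<sigma> \<union> \<tau>) = card (W - {v})"
      using p cardV fin finite_subset[OF p(4)] finite_subset[OF p(5)]
      by (simp add: card_Un_disjoint ksimplices_def)
    then have "\<sigma> \<union> \<tau> = W - {v}"
      using sub fin by (simp add: card_subset_eq)
    then have "\<tau> = W - {v} - \<sigma>"
      using p(6) by blast
    then show "p \<in> (\<lambda>\<sigma>. {\<sigma>, W - {v} - \<sigma>}) ` {\<sigma>. \<sigma> \<subseteq> W - {v} \<and> card \<sigma> = k + 1}"
      using p sub by (auto simp: ksimplices_def)
  next
    fix p assume "p \<in> (\<lambda>\<sigma>. {\<sigma>, W - {v} - \<sigma>}) ` {\<sigma>. \<sigma> \<subseteq> W - {v} \<and> card \<sigma> = k + 1}"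
    then obtain \<sigma> where \<sigma>: "p = {\<sigma>, W - {v} - \<sigma>}" "\<sigma> \<subseteq> W - {v}" "card \<sigma> = k + 1"
      by blast
    have "card (W - {v} - \<sigma>) = k + 1"
      using \<sigma> cardV fin by (simp add: card_Diff_subset finite_subset)
    then show "p \<in> PJv n k W v"
      unfolding PJv_def ksimplices_def using \<sigma> W(1) by blast
  qed
qed

lemma bij_betw_PJ_diff_PJv:
  assumes W: "W \<subseteq> {0..n}" "card W = 2 * k + 3" and v: "v \<in> W"
  shows "bij_betw (\<lambda>p. {fst p, W - fst p - {snd p}})
    (SIGMA \<sigma>:{\<sigma>. \<sigma> \<subseteq> W - {v} \<and> card \<sigma> = k + 1}. W - {v} - \<sigma>) (PJ n k W - PJv n k W v)"
proof -
  have fin: "finite W"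
    using W(1) finite_subset by blast
  let ?S = "SIGMA \<sigma>:{\<sigma>. \<sigma> \<subseteq> W - {v} \<and> card \<sigma> = k + 1}. W - {v} - \<sigma>"
  have inj: "inj_on (\<lambda>p. {fst p, W - fst p - {snd p}}) ?S"
  proof (rule inj_onI)
    fix p q assume "p \<in> ?S" "q \<in> ?S"
      and eq: "{fst p, W - fst p - {snd p}} = {fst q, W - fst q - {snd q}}"
    then have pq: "v \<notin> fst p" "v \<in> W - fst q - {snd q}" "snd p \<in> W - fst p" "snd q \<in> W - fst q"
      using v by auto
    then have fst: "fst p = fst q"
      using eq unfolding doubleton_eq_iff by blast
    then have "W - fst p - {snd p} = W - fst p - {snd q}"
      using eq pq unfolding doubleton_eq_iff by blast
    then have "snd p = snd q"
      using pq fst by blast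
    then show "p = q"
      using fst by (simp add: prod_eq_iff)
  qed
  have "(\<lambda>p. {fst p, W - fst p - {snd p}}) ` ?S = PJ n k W - PJv n k W v"
  proof (intro equalityI subsetI)
    fix p assume "p \<in> (\<lambda>p. {fst p, W - fst p - {snd p}}) ` ?S"
    then obtain q where q: "q \<in> ?S" "p = {fst q, W - fst q - {snd q}}"
      by blast
    obtain \<sigma> y where "q = (\<sigma>, y)"
      by fastforce
    with q have \<sigma>: "p = {\<sigma>, W - \<sigma> - {y}}" "\<sigma> \<subseteq> W - {v}" "card \<sigma> = k + 1"
      "y \<in> W - {v} - \<sigma>"
      by auto
    have "\<sigma> \<subseteq> W"
      using \<sigma>(2) by blast
    then have "card (W - \<sigma> - {y}) = k + 1"
      using \<sigma> W(2) fin by (simp add: card_Diff_subset finite_subset)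
    then have "p \<in> PJ n k W"
      unfolding PJ_def ksimplices_def using \<sigma> W(1) by blast
    moreover have "v \<in> W - \<sigma> - {y}"
      using \<sigma> v by blast
    have "p \<notin> PJv n k W v"
    proof
      assume "p \<in> PJv n k W v"
      then obtain a b where "p = {a, b}" "v \<notin> a" "v \<notin> b"
        unfolding PJv_def by blast
      then show False
        using \<sigma>(1) \<open>v \<in> W - \<sigma> - {y}\<close> by (auto simp: doubleton_eq_iff)
    qed
    ultimately show "p \<in> PJ n k W - PJv n k W v"
      by blast
  next
    fix p assume "p \<in> PJ n k W - PJv n k W v"
    then obtain \<sigma>0 \<tau>0 where p0: "p = {\<sigma>0, \<tau>0}" "\<sigma>0 \<in> ksimplices n k" "\<tau>0 \<in> ksimplices n k"
      "\<sigma>0 \<subseteq> W" "\<tau>0 \<subseteq> W" "\<sigma>0 \<inter> \<tau>0 = {}"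
      unfolding PJ_def by blast
    have "v \<in> \<sigma>0 \<or> v \<in> \<tau>0"
      using \<open>p \<in> PJ n k W - PJv n k W v\<close> p0 unfolding PJv_def by blast
    then have "\<exists>\<sigma> \<tau>. p = {\<sigma>, \<tau>} \<and> \<sigma> \<in> ksimplices n k \<and> \<tau> \<in> ksimplices n k
        \<and> \<sigma> \<subseteq> W \<and> \<tau> \<subseteq> W \<and> \<sigma> \<inter> \<tau> = {} \<and> v \<in> \<tau>"
    proof (cases "v \<in> \<tau>0")
      case True
      with p0 show ?thesis
        by (intro exI[of _ \<sigma>0] exI[of _ \<tau>0]) simp
    next
      case False
      with p0 \<open>v \<in> \<sigma>0 \<or> v \<in> \<tau>0\<close> show ?thesis
        by (intro exI[of _ \<tau>0] exI[of _ \<sigma>0]) (simp add: insert_commute Int_commute)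
    qed
    then obtain \<sigma> \<tau> where p: "p = {\<sigma>, \<tau>}" "\<sigma> \<in> ksimplices n k" "\<tau> \<in> ksimplices n k"
      "\<sigma> \<subseteq> W" "\<tau> \<subseteq> W" "\<sigma> \<inter> \<tau> = {}" "v \<in> \<tau>"
      by blast
    have "card (W - (\<sigma> \<union> \<tau>)) = 1"
      using p W(2) fin finite_subset[OF p(4)] finite_subset[OF p(5)]
      by (simp add: card_Diff_subset card_Un_disjoint ksimplices_def)
    then obtain y where y: "W - (\<sigma> \<union> \<tau>) = {y}"
      by (rule card_1_singletonE)
    have "W - \<sigma> - {y} = \<tau>"
      using p(5,6) y by blast
    moreover have "(\<sigma>, y) \<in> ?S"
      using p(2,4,6,7) y by (auto simp: ksimplices_def)
    ultimately show "p \<in> (\<lambda>p. {fst p, W - fst p - {snd p}}) ` ?S"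
      using p(1) by (metis (no_types, lifting) fst_conv snd_conv image_eqI)
  qed
  with inj show ?thesis
    by (simp add: bij_betw_def)
qed

lemma sum_cone_faces_ordered_eq_0:
  fixes g :: "nat set \<Rightarrow> nat set \<Rightarrow> bit"
  assumes V: "finite V" "card V = 2 * k + 2" and k: "k \<ge> 1" and sym: "\<And>A B. g A B = g B A"
  shows "(\<Sum>\<sigma>\<in>{\<sigma>. \<sigma> \<subseteq> V \<and> card \<sigma> = k + 1}. \<Sum>x\<in>\<sigma>. \<Sum>y\<in>{y \<in> V - \<sigma>. x < y}.
      g (insert v (\<sigma> - {x})) (insert v (V - \<sigma> - {y}))) = 0"
proof -
  define T where "T = (SIGMA \<sigma>:{\<sigma>. \<sigma> \<subseteq> V \<and> card \<sigma> = k + 1}. SIGMA x:\<sigma>. {y \<in> V - \<sigma>. x < y})"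
  define h where "h = (\<lambda>(\<sigma>, x, y). g (insert v (\<sigma> - {x})) (insert v (V - \<sigma> - {y})))"
  define \<iota> where "\<iota> = (\<lambda>(\<sigma>, x, y). (insert x (V - \<sigma> - {y}), x, y))"
  have fin: "finite \<sigma>" if "\<sigma> \<subseteq> V" for \<sigma>
    using V(1) that finite_subset by blast
  have swap: "insert x (V - \<sigma> - {y}) - {x} = V - \<sigma> - {y}"
      "V - insert x (V - \<sigma> - {y}) - {y} = \<sigma> - {x}"
    if "\<sigma> \<subseteq> V" "x \<in> \<sigma>" "y \<in> V - \<sigma>" for \<sigma> x y
    using that by auto
  have "(\<Sum>z\<in>T. h z) = 0"
  proof (rule sum_involution_eq_0[where h = \<iota>])
    fix z assume "z \<in> T"
    then obtain \<sigma> x y where z: "z = (\<sigma>, x, y)" "\<sigma> \<subseteq> V" "card \<sigma> = k + 1" "x \<in> \<sigma>" "y \<in> V - \<sigma>" "x < y"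
      unfolding T_def by auto
    define \<sigma>' where "\<sigma>' = insert x (V - \<sigma> - {y})"
    have \<iota>z: "\<iota> z = (\<sigma>', x, y)"
      unfolding \<iota>_def \<sigma>'_def z(1) by simp
    have card_rest: "card (V - \<sigma> - {y}) = k"
      using z V fin by (simp add: card_Diff_subset)
    have "card \<sigma>' = k + 1"
      unfolding \<sigma>'_def using z card_rest V(1) by (simp add: card_insert_if)
    then show "\<iota> z \<in> T"
      unfolding \<iota>z T_def \<sigma>'_def using z by auto
    show "\<iota> (\<iota> z) = z"
      unfolding \<iota>z z(1) \<sigma>'_def using swap[OF z(2,4,5)] z by (auto simp: \<iota>_def)
    have "V - \<sigma> - {y} \<noteq> {}"
      using card_rest k by (metis card.empty not_one_le_zero)
    then obtain w where "w \<in> V - \<sigma> - {y}"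
      by blast
    then have "\<sigma>' \<noteq> \<sigma>"
      unfolding \<sigma>'_def by blast
    then show "\<iota> z \<noteq> z"
      unfolding \<iota>z using z(1) by simp
    have "h (\<iota> z) = g (insert v (V - \<sigma> - {y})) (insert v (\<sigma> - {x}))"
      unfolding \<iota>z \<sigma>'_def h_def using swap[OF z(2,4,5)] by simp
    also have "\<dots> = h z"
      unfolding h_def z(1) by (simp add: sym)
    finally have "h (\<iota> z) = h z" .
    then show "h (\<iota> z) + h z = 0"
      by simp
  qed
  moreover have "(\<Sum>z\<in>T. h z) = (\<Sum>\<sigma>\<in>{\<sigma>. \<sigma> \<subseteq> V \<and> card \<sigma> = k + 1}. \<Sum>x\<in>\<sigma>. \<Sum>y\<in>{y \<in> V - \<sigma>. x < y}.
      g (insert v (\<sigma> - {x})) (insert v (V - \<sigma> - {y})))"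
  proof -
    have "finite {\<sigma>. \<sigma> \<subseteq> V \<and> card \<sigma> = k + 1}"
      using V(1) by simp
    moreover have "finite (SIGMA x:\<sigma>. {y \<in> V - \<sigma>. x < y})" if "\<sigma> \<subseteq> V" for \<sigma>
      using fin[OF that] V(1) by auto
    ultimately have "(\<Sum>z\<in>T. h z)
        = (\<Sum>\<sigma>\<in>{\<sigma>. \<sigma> \<subseteq> V \<and> card \<sigma> = k + 1}. \<Sum>q\<in>(SIGMA x:\<sigma>. {y \<in> V - \<sigma>. x < y}). h (\<sigma>, q))"
      unfolding T_def by (subst sum.Sigma) auto
    also have "\<dots> = (\<Sum>\<sigma>\<in>{\<sigma>. \<sigma> \<subseteq> V \<and> card \<sigma> = k + 1}. \<Sum>x\<in>\<sigma>. \<Sum>y\<in>{y \<in> V - \<sigma>. x < y}. h (\<sigma>, x, y))"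
      using fin V(1) by (intro sum.cong refl, subst sum.Sigma) auto
    finally show ?thesis
      by (simp add: h_def)
  qed
  ultimately show ?thesis
    by simp
qed

lemma sum_cone_cross_terms:
  fixes g :: "nat set \<Rightarrow> nat set \<Rightarrow> bit"
  assumes W: "W \<subseteq> {0..n}" "card W = 2 * k + 3" and v: "v \<in> W" and k: "k \<ge> 1"
    and sym: "\<And>A B. g A B = g B A"
  shows "(\<Sum>\<sigma>\<in>{\<sigma>. \<sigma> \<subseteq> W - {v} \<and> card \<sigma> = k + 1}. cone_cross_terms g v \<sigma> (W - {v} - \<sigma>))
    = upair_sum g (PJ n k W - PJv n k W v)"
proof -
  let ?K = "{\<sigma>. \<sigma> \<subseteq> W - {v} \<and> card \<sigma> = k + 1}"
  have fin: "finite W"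
    using W(1) finite_subset by blast
  have cone: "insert v (W - {v} - \<sigma> - {y}) = W - \<sigma> - {y}" if "\<sigma> \<in> ?K" "y \<in> W - {v} - \<sigma>" for \<sigma> y
    using that v by auto
  have "(\<Sum>\<sigma>\<in>?K. cone_cross_terms g v \<sigma> (W - {v} - \<sigma>))
      = (\<Sum>\<sigma>\<in>?K. \<Sum>y\<in>W - {v} - \<sigma>. g \<sigma> (W - \<sigma> - {y}))
      + (\<Sum>\<sigma>\<in>?K. \<Sum>x\<in>\<sigma>. \<Sum>y\<in>{y \<in> W - {v} - \<sigma>. x < y}.
           g (insert v (\<sigma> - {x})) (insert v (W - {v} - \<sigma> - {y})))"
    unfolding cone_cross_terms_def sum.distrib using cone by simp
  also have "(\<Sum>\<sigma>\<in>?K. \<Sum>x\<in>\<sigma>. \<Sum>y\<in>{y \<in> W - {v} - \<sigma>. x < y}.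
           g (insert v (\<sigma> - {x})) (insert v (W - {v} - \<sigma> - {y}))) = 0"
    using fin W(2) v k sym by (intro sum_cone_faces_ordered_eq_0) auto
  also have "(\<Sum>\<sigma>\<in>?K. \<Sum>y\<in>W - {v} - \<sigma>. g \<sigma> (W - \<sigma> - {y}))
      = (\<Sum>p\<in>(SIGMA \<sigma>:?K. W - {v} - \<sigma>). g (fst p) (W - fst p - {snd p}))"
    using fin by (subst sum.Sigma) (auto simp: split_def)
  also have "\<dots> = upair_sum g (PJ n k W - PJv n k W v)"
    using v sym by (intro upair_sum_reindex[symmetric] bij_betw_PJ_diff_PJv W) auto
  finally show ?thesis
    by simp
qed

lemma upair_sum_PJv_symmetrized:
  assumes W: "W \<subseteq> {0..n}" "card W = 2 * k + 3" and v: "v \<in> W"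
  shows "upair_sum (\<lambda>\<sigma> \<tau>. G \<sigma> \<tau> + G \<tau> \<sigma>) (PJv n k W v)
    = (\<Sum>\<sigma>\<in>{\<sigma>. \<sigma> \<subseteq> W - {v} \<and> card \<sigma> = k + 1}. G \<sigma> (W - {v} - \<sigma>))"
  unfolding PJv_eq_complement_pairs[OF W v]
proof (rule upair_sum_symmetrize_orbits)
  have fin: "finite W"
    using W(1) finite_subset by blast
  then show "finite {\<sigma>. \<sigma> \<subseteq> W - {v} \<and> card \<sigma> = k + 1}"
    by simp
  fix \<sigma> assume \<sigma>: "\<sigma> \<in> {\<sigma>. \<sigma> \<subseteq> W - {v} \<and> card \<sigma> = k + 1}"
  have "finite \<sigma>"
    using \<sigma> fin finite_subset by blast
  then have "card (W - {v} - \<sigma>) = k + 1"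
    using \<sigma> W(2) v fin by (simp add: card_Diff_subset)
  then show "W - {v} - \<sigma> \<in> {\<sigma>. \<sigma> \<subseteq> W - {v} \<and> card \<sigma> = k + 1}"
    by blast
  show "W - {v} - (W - {v} - \<sigma>) = \<sigma>"
    using \<sigma> by blast
  have "\<sigma> \<noteq> {}"
    using \<sigma> by auto
  then show "W - {v} - \<sigma> \<noteq> \<sigma>"
    by blast
qed

lemma upair_sum_PJ_split:
  assumes "finite W"
  shows "upair_sum g (PJ n k W) = upair_sum g (PJv n k W v) + upair_sum g (PJ n k W - PJv n k W v)"
proof -
  have "PJ n k W \<subseteq> Pow (Pow W)"
    unfolding PJ_def by blast
  then have "finite (PJ n k W)"
    using assms finite_subset by blast
  moreover have "PJv n k W v \<subseteq> PJ n k W"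
    unfolding PJ_def PJv_def by blast
  ultimately show ?thesis
    unfolding upair_sum_def by (simp add: sum.subset_diff add.commute)
qed

lemma card_PJv_member: "p \<in> PJv n k W v \<Longrightarrow> card p = 2"
  unfolding PJv_def by (auto simp: ksimplices_def card_insert_if)

lemma PJv_memD:
  assumes "{\<sigma>, \<tau>} \<in> PJv n k W v"
  shows "\<sigma> \<in> ksimplices n k" "\<tau> \<in> ksimplices n k" "\<sigma> \<inter> \<tau> = {}" "v \<notin> \<sigma>" "v \<notin> \<tau>"
  using assms unfolding PJv_def by (auto simp: doubleton_eq_iff)

theorem lemma17:
  fixes n k :: nat and W :: "nat set" and v :: nat
    and \<psi> :: "(nat set \<Rightarrow> bit) \<Rightarrow> 'v::ab_group_add"
    and \<Omega> :: "'v \<Rightarrow> 'v \<Rightarrow> bit"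
  assumes k: "k \<ge> 1"
    and char2: "\<And>x::'v. x + x = 0"
    and psi_hom: "\<And>c d. c \<in> chains n k \<Longrightarrow> d \<in> chains n k \<Longrightarrow> \<psi> (\<lambda>s. c s + d s) = \<psi> c + \<psi> d"
    and Omega_lin: "\<And>x y z. \<Omega> (x + y) z = \<Omega> x z + \<Omega> y z"
    and Omega_sym: "\<And>x y. \<Omega> x y = \<Omega> y x"
    and W: "W \<subseteq> {0..n}" "card W = 2 * k + 3"
    and v: "v \<in> W"
  shows "upair_sum (\<lambda>\<sigma> \<tau>. \<Omega> (\<psi> (elem \<sigma>)) (\<psi> (elem \<tau>))) (PJ n k W)
       = upair_sum (\<lambda>\<sigma> \<tau>. \<Omega> (\<psi> (bd (\<sigma> \<union> {v}))) (\<psi> (bd (\<tau> \<union> {v})))) (PJv n k W v)"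
proof -
  define g where "g = (\<lambda>A B. \<Omega> (\<psi> (elem A)) (\<psi> (elem B)))"
  define \<Psi> where "\<Psi> = cone_cross_terms g v"
  have "v \<le> n"
    using W(1) v by auto
  have "upair_sum (\<lambda>\<sigma> \<tau>. \<Omega> (\<psi> (bd (\<sigma> \<union> {v}))) (\<psi> (bd (\<tau> \<union> {v})))) (PJv n k W v)
      = upair_sum (\<lambda>\<sigma> \<tau>. g \<sigma> \<tau> + (\<Psi> \<sigma> \<tau> + \<Psi> \<tau> \<sigma>)) (PJv n k W v)"
  proof (rule upair_sum_cong[OF card_PJv_member])
    show "\<Omega> (\<psi> (bd (\<sigma> \<union> {v}))) (\<psi> (bd (\<tau> \<union> {v}))) = g \<sigma> \<tau> + (\<Psi> \<sigma> \<tau> + \<Psi> \<tau> \<sigma>)"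
      if "{\<sigma>, \<tau>} \<in> PJv n k W v" for \<sigma> \<tau>
      unfolding \<Psi>_def g_def using psi_hom Omega_lin Omega_sym PJv_memD(1-3)[OF that] \<open>v \<le> n\<close>
        PJv_memD(4,5)[OF that]
      by (rule Omega_bd_cone_expansion)
  qed
  also have "\<dots> = upair_sum g (PJv n k W v)
      + (\<Sum>\<sigma>\<in>{\<sigma>. \<sigma> \<subseteq> W - {v} \<and> card \<sigma> = k + 1}. \<Psi> \<sigma> (W - {v} - \<sigma>))"
    by (simp only: upair_sum_add[of g] upair_sum_PJv_symmetrized[OF W v])
  also have "\<dots> = upair_sum g (PJv n k W v) + upair_sum g (PJ n k W - PJv n k W v)"
    unfolding \<Psi>_def by (subst sum_cone_cross_terms[OF W v k]) (simp_all add: g_def Omega_sym)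
  also have "\<dots> = upair_sum g (PJ n k W)"
    using W(1) finite_subset by (intro upair_sum_PJ_split[symmetric]) blast
  finally show ?thesis
    by (simp add: g_def)
qed

end
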